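(* Let $G^{(1)},\dots,G^{(\ell)}$ be directed graphs on a common node set $V$ and run SKIM (described in the context) with sketch parameter $k$. Consider any iteration of SKIM, and let $v$ be the seed node selected in that iteration, with threshold rank $\tau_v$ (the $k$th smallest rank in its partial sketch at selection time). Then, at the end of that iteration (after the residual update), for every node $u$ not in the seed set, the updated partial sketch $X_u$ is equal to the set of entries of the combined reachability sketch $X'_u$ of $u$ in the residual problem that have rank value at most $\tau_v$.
   Context: Each node-instance pair $(z,i)$ ($z\in V$, $i\in[\ell]$) has an independent uniform random rank $r^{(i)}_z\in[0,1]$. The residual problem after an iteration is obtained from the instances by removing all covered node-instance pairs (pairs $(z,i)$ such that $z$ is reachable in $G^{(i)}$ from some already selected seed). In the residual problem, the combined reachability sketch $X'_u$ of $u$ is the set of the $k$ smallest ranks $r^{(i)}_z$ over pairs $(z,i)$ such that $z$ is reachable from $u$ in the residual instance $i$ (the graph $G^{(i)}$ restricted to its uncovered nodes), with $u$ reaching itself. SKIM with parameter $k$: maintain a set of covered pairs (initially empty), a partial sketch $X_w$ (set of ranks, initially empty) for every node $w$, and a list of seeds. Repeat: (1) process uncovered pairs $(u,i)$ in increasing rank order, continuing from where the previous iteration stopped; for each, do a reverse reachability search from $u$ in $G^{(i)}$ restricted to uncovered pairs of instance $i$, inserting $r^{(i)}_u$ into $X_w$ for every visited node $w$; stop as soon as some node $x$ has $|X_x|=k$, and select $x$ as the next seed (if all pairs are exhausted, select a node of maximum $|X_x|$). (2) For each instance $i$, do a forward reachability search from $x$ in $G^{(i)}$ pruning at covered pairs,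 mark the reached pairs as covered, and remove their ranks from all partial sketches ($X_u\leftarrow X_u\setminus X_x$). *)

theory Defs
  imports Complex_Main
begin

(* Nodes have type 'v, the common node set is V, instances are 0..<l,
   instance i has directed edge set E i ((a,b) means an edge a -> b),
   r z i is the rank of the node-instance pair (z,i). *)

record ('v) skim_state =
  covered   :: "('v \<times> nat) set"
  processed :: "('v \<times> nat) set"
  sketch    :: "'v \<Rightarrow> real set"
  seeds     :: "'v list"

(* z is reachable from u in the residual instance i, i.e. in G^(i) restricted
   to the nodes w with (w,i) uncovered; u reaches itself if (u,i) is uncovered. *)
definition res_reach ::
  "'v set \<Rightarrow> (nat \<Rightarrow> ('v \<times> 'v) set) \<Rightarrow> ('v \<times> nat) set \<Rightarrow> nat \<Rightarrow> 'v \<Rightarrow> 'v \<Rightarrow> bool" where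
  "res_reach V E C i u z \<longleftrightarrow>
     u \<in> V \<and> (u, i) \<notin> C \<and> (u, z) \<in> (Restr (E i) {w \<in> V. (w, i) \<notin> C})\<^sup>*"

definition bottom_k :: "nat \<Rightarrow> real set \<Rightarrow> real set" where
  "bottom_k k S = {x \<in> S. card {y \<in> S. y < x} < k}"

definition kth_smallest :: "nat \<Rightarrow> real set \<Rightarrow> real" where
  "kth_smallest k S = (THE x. x \<in> S \<and> card {y \<in> S. y < x} = k - 1)"

definition combined_sketch ::
  "'v set \<Rightarrow> (nat \<Rightarrow> ('v \<times> 'v) set) \<Rightarrow> nat \<Rightarrow> ('v \<Rightarrow> nat \<Rightarrow> real) \<Rightarrow> nat
   \<Rightarrow> ('v \<times> nat) set \<Rightarrow> 'v \<Rightarrow> real set" where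
  "combined_sketch V E l r k C u =
     bottom_k k {r z i | z i. i < l \<and> res_reach V E C i u z}"

definition skim_init :: "'v skim_state" where
  "skim_init = \<lparr>covered = {}, processed = {}, sketch = (\<lambda>_. {}), seeds = []\<rparr>"

definition avail :: "'v set \<Rightarrow> nat \<Rightarrow> 'v skim_state \<Rightarrow> ('v \<times> nat) set" where
  "avail V l s = {(u, i). u \<in> V \<and> i < l \<and> (u, i) \<notin> covered s \<and> (u, i) \<notin> processed s}"

(* processing one pair (u,i) in step (1): it is the available pair of minimum rank
   (i.e. processing continues in increasing rank order); the reverse search from u
   in the residual instance i inserts r u i into X_w of every visited node w *)
definition process_pair ::
  "'v set \<Rightarrow> (nat \<Rightarrow> ('v \<times> 'v) set) \<Rightarrow> nat \<Rightarrow> ('v \<Rightarrow> nat \<Rightarrow> real)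
   \<Rightarrow> 'v skim_state \<Rightarrow> 'v skim_state \<Rightarrow> bool" where
  "process_pair V E l r s s' \<longleftrightarrow>
     (\<exists>u i. (u, i) \<in> avail V l s \<and>
        (\<forall>(z, j) \<in> avail V l s. r u i \<le> r z j) \<and>
        s' = s\<lparr>processed := insert (u, i) (processed s),
               sketch := (\<lambda>w. if res_reach V E (covered s) i w u
                                then insert (r u i) (sketch s w) else sketch s w)\<rparr>)"

(* step (1) of an iteration: scan s s1 x reg means that, starting in state s,
   processing pairs leads to state s1 where x is selected as seed;
   reg = True: selected because |X_x| = k; reg = False: all pairs exhausted and
   x has maximum |X_x|. *)
inductive skim_scan ::
  "'v set \<Rightarrow> (nat \<Rightarrow> ('v \<times> 'v) set) \<Rightarrow> nat \<Rightarrow> ('v \<Rightarrow> nat \<Rightarrow> real) \<Rightarrow> nat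
   \<Rightarrow> 'v skim_state \<Rightarrow> 'v skim_state \<Rightarrow> 'v \<Rightarrow> bool \<Rightarrow> bool"
  for V E l r k where
  scan_select: "\<lbrakk> x \<in> V; card (sketch s x) = k \<rbrakk> \<Longrightarrow> skim_scan V E l r k s s x True"
| scan_step: "\<lbrakk> \<forall>w\<in>V. card (sketch s w) < k; process_pair V E l r s s1;
                 skim_scan V E l r k s1 s2 x b \<rbrakk> \<Longrightarrow> skim_scan V E l r k s s2 x b"
| scan_exhausted: "\<lbrakk> \<forall>w\<in>V. card (sketch s w) < k; avail V l s = {}; x \<in> V;
                      \<forall>w\<in>V. card (sketch s w) \<le> card (sketch s x) \<rbrakk>
                    \<Longrightarrow> skim_scan V E l r k s s x False"

definition residual_update ::
  "'v set \<Rightarrow> (nat \<Rightarrow> ('v \<times> 'v) set) \<Rightarrow> nat \<Rightarrow> 'v skim_state \<Rightarrow> 'v \<Rightarrow> 'v skim_state" where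
  "residual_update V E l s x =
     s\<lparr>covered := covered s \<union> {(z, i). i < l \<and> res_reach V E (covered s) i x z},
       sketch := (\<lambda>u. sketch s u - sketch s x),
       seeds := seeds s @ [x]\<rparr>"

inductive skim_reachable ::
  "'v set \<Rightarrow> (nat \<Rightarrow> ('v \<times> 'v) set) \<Rightarrow> nat \<Rightarrow> ('v \<Rightarrow> nat \<Rightarrow> real) \<Rightarrow> nat
   \<Rightarrow> 'v skim_state \<Rightarrow> bool"
  for V E l r k where
  reach_init: "skim_reachable V E l r k skim_init"
| reach_iter: "\<lbrakk> skim_reachable V E l r k s; skim_scan V E l r k s s1 x b \<rbrakk>
               \<Longrightarrow> skim_reachable V E l r k (residual_update V E l s1 x)"

end

theory Submission
  imports Defs
begin

text \<open>
  SKIM maintains two invariants: every partial sketch \<open>X\<^sub>w\<close> consists of the ranks of exactly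
  those processed pairs that are reachable from \<open>w\<close> in the current residual problem, and
  every processed pair precedes every still available pair in rank order. Covering what the
  seed \<open>x\<close> reaches removes from the residual reach of \<open>w\<close> precisely the pairs also reachable
  from \<open>x\<close>, and since ranks are injective this is exactly the update
  \<open>X\<^sub>w \<leftarrow> X\<^sub>w \<setminus> X\<^sub>x\<close>. A sketch becomes full only through the last processed rank, so the
  maximum \<open>\<tau>\<close> of the selected sketch bounds all partial sketches; hence after the update
  \<open>X\<^sub>u\<close> is the set of residual reachable ranks up to \<open>\<tau>\<close>. It has at most \<open>k\<close> elements,
  so these ranks all belong to the bottom-\<open>k\<close> sketch \<open>X'\<^sub>u\<close>.
\<close>

lemma res_reach_uncovered:
  "res_reach V E C i u z \<Longrightarrow> z \<in> V \<and> (z, i) \<notin> C"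
  unfolding res_reach_def by (auto elim: rtranclE)

lemma res_reach_antimono:
  assumes "C \<subseteq> C'" "res_reach V E C' i u z"
  shows "res_reach V E C i u z"
proof -
  have "Restr (E i) {w \<in> V. (w, i) \<notin> C'} \<subseteq> Restr (E i) {w \<in> V. (w, i) \<notin> C}"
    using assms(1) by auto
  then have "(Restr (E i) {w \<in> V. (w, i) \<notin> C'})\<^sup>* \<subseteq> (Restr (E i) {w \<in> V. (w, i) \<notin> C})\<^sup>*"
    by (rule rtrancl_mono)
  with assms show ?thesis
    unfolding res_reach_def by blast
qed

lemma res_reach_residual_iff:
  assumes "i < l"
  shows "res_reach V E (C \<union> {(z, i). i < l \<and> res_reach V E C i x z}) i w z \<longleftrightarrow>
         res_reach V E C i w z \<and> \<not> res_reach V E C i x z"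
    (is "res_reach V E ?C' i w z \<longleftrightarrow> _")
proof
  assume reach': "res_reach V E ?C' i w z"
  then have "(z, i) \<notin> ?C'" by (rule res_reach_uncovered[THEN conjunct2])
  moreover have "res_reach V E C i w z"
    using reach' by (rule res_reach_antimono[rotated]) blast
  ultimately show "res_reach V E C i w z \<and> \<not> res_reach V E C i x z"
    using assms by blast
next
  define R where "R = Restr (E i) {y \<in> V. (y, i) \<notin> C}"
  define R' where "R' = Restr (E i) {y \<in> V. (y, i) \<notin> ?C'}"
  assume reach: "res_reach V E C i w z \<and> \<not> res_reach V E C i x z"
  then have w: "w \<in> V" "(w, i) \<notin> C" "(w, z) \<in> R\<^sup>*"
    unfolding res_reach_def R_def by auto
  have not_from_x: "\<not> res_reach V E C i x y" if "(y, z) \<in> R\<^sup>*" for y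
  proof
    assume "res_reach V E C i x y"
    with that have "res_reach V E C i x z"
      unfolding res_reach_def R_def by (blast intro: rtrancl_trans)
    with reach show False by simp
  qed
  have "(y, z) \<in> R'\<^sup>*" if "(y, z) \<in> R\<^sup>*" for y
    using that
  proof (induction rule: converse_rtrancl_induct)
    case (step y y')
    then have "(y, z) \<in> R\<^sup>*" by (simp add: converse_rtrancl_into_rtrancl)
    with step have "(y, y') \<in> R'"
      using not_from_x[of y] not_from_x[of y'] assms unfolding R_def R'_def by auto
    then show ?case using step.IH by simp
  qed simp
  with w not_from_x[of w] assms show "res_reach V E ?C' i w z"
    unfolding res_reach_def R'_def by auto
qed

lemma kth_smallest_eq_Max:
  assumes "finite S" "card S = k" "k \<ge> 1"
  shows "kth_smallest k S = Max S"
  unfolding kth_smallest_def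
proof (rule the_equality)
  have "S \<noteq> {}" using assms by auto
  then have max_in: "Max S \<in> S" using assms(1) by simp
  have "y \<le> Max S" if "y \<in> S" for y using assms(1) that by simp
  then have "{y \<in> S. y < Max S} = S - {Max S}" by (auto simp: less_le)
  then show "Max S \<in> S \<and> card {y \<in> S. y < Max S} = k - 1"
    using max_in assms by simp
next
  fix x assume x: "x \<in> S \<and> card {y \<in> S. y < x} = k - 1"
  show "x = Max S"
  proof (rule ccontr)
    assume "x \<noteq> Max S"
    then have "x < Max S" using x assms(1) by (simp add: order.not_eq_order_implies_strict)
    moreover have "Max S \<in> S" using x assms(1) Max_in by blast
    ultimately have "Max S \<in> S - {x}" "Max S \<notin> {y \<in> S. y < x}" by auto
    then have "{y \<in> S. y < x} \<subset> S - {x}" by blast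
    then have "card {y \<in> S. y < x} < card (S - {x})"
      using assms(1) by (meson finite_Diff psubset_card_mono)
    then show False using x assms by simp
  qed
qed

lemma bottom_k_below:
  fixes S :: "real set"
  assumes "finite {x \<in> S. x \<le> t}" "card {x \<in> S. x \<le> t} \<le> k"
  shows "{x \<in> bottom_k k S. x \<le> t} = {x \<in> S. x \<le> t}"
proof -
  have "card {y \<in> S. y < x} < k" if "x \<in> S" "x \<le> t" for x
  proof -
    have "{y \<in> S. y < x} \<subset> {y \<in> S. y \<le> t}" using that by auto
    then have "card {y \<in> S. y < x} < card {y \<in> S. y \<le> t}"
      using assms(1) by (rule psubset_card_mono[rotated])
    with assms(2) show ?thesis by simp
  qed
  then show ?thesis unfolding bottom_k_def by auto
qed

definition skim_invariant ::
  "'v set \<Rightarrow> (nat \<Rightarrow> ('v \<times> 'v) set) \<Rightarrow> nat \<Rightarrow> ('v \<Rightarrow> nat \<Rightarrow> real) \<Rightarrow> 'v skim_state \<Rightarrow> bool"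
where
  "skim_invariant V E l r s \<longleftrightarrow>
     processed s \<subseteq> V \<times> {..<l} \<and>
     (\<forall>w. sketch s w = case_prod r ` {(z, j) \<in> processed s. res_reach V E (covered s) j w z}) \<and>
     (\<forall>p \<in> processed s. \<forall>q \<in> avail V l s. case_prod r p \<le> case_prod r q)"

definition full_sketch_bound :: "'v set \<Rightarrow> nat \<Rightarrow> 'v skim_state \<Rightarrow> bool" where
  "full_sketch_bound V k s \<longleftrightarrow>
     (\<forall>w \<in> V. card (sketch s w) \<le> k \<and>
        (card (sketch s w) = k \<longrightarrow> (\<forall>w' \<in> V. \<forall>\<rho> \<in> sketch s w'. \<rho> \<le> Max (sketch s w))))"

lemma full_sketch_bound_if_not_full:
  "\<forall>w \<in> V. card (sketch s w) < k \<Longrightarrow> full_sketch_bound V k s"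
  unfolding full_sketch_bound_def by (metis less_imp_le less_irrefl)

lemma skim_invariant_finite_sketch:
  assumes "finite V" "skim_invariant V E l r s"
  shows "finite (sketch s w)"
proof -
  have "finite (processed s)"
    using assms unfolding skim_invariant_def by (meson finite_SigmaI finite_lessThan finite_subset)
  moreover have "sketch s w \<subseteq> case_prod r ` processed s"
    using assms(2) unfolding skim_invariant_def by blast
  ultimately show ?thesis by (meson finite_imageI finite_subset)
qed

lemma process_pairE:
  assumes "process_pair V E l r s s'"
  obtains u i where "(u, i) \<in> avail V l s" "\<forall>(z, j) \<in> avail V l s. r u i \<le> r z j"
    and "covered s' = covered s" "processed s' = insert (u, i) (processed s)"
    and "\<And>w. sketch s' w = (if res_reach V E (covered s) i w u
                             then insert (r u i) (sketch s w) else sketch s w)"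
  using assms unfolding process_pair_def by force

lemma process_pair_invariant:
  assumes inv: "skim_invariant V E l r s" and step: "process_pair V E l r s s'"
  shows "skim_invariant V E l r s'"
proof -
  obtain u i where ui: "(u, i) \<in> avail V l s" and least: "\<forall>(z, j) \<in> avail V l s. r u i \<le> r z j"
    and cov: "covered s' = covered s" and proc: "processed s' = insert (u, i) (processed s)"
    and sk: "\<And>w. sketch s' w = (if res_reach V E (covered s) i w u
                                  then insert (r u i) (sketch s w) else sketch s w)"
    using process_pairE[OF step] by blast
  have avail_sub: "avail V l s' \<subseteq> avail V l s"
    unfolding avail_def cov proc by auto
  have "processed s' \<subseteq> V \<times> {..<l}"
    using inv ui unfolding skim_invariant_def avail_def proc by auto
  moreover have "sketch s' w =
      case_prod r ` {(z, j) \<in> processed s'. res_reach V E (covered s') j w z}" for w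
    using inv unfolding skim_invariant_def sk cov proc by auto
  moreover have "case_prod r p \<le> case_prod r q" if "p \<in> processed s'" "q \<in> avail V l s'" for p q
    using that inv least avail_sub unfolding skim_invariant_def proc by auto
  ultimately show ?thesis unfolding skim_invariant_def by blast
qed

lemma process_pair_full_sketch_bound:
  assumes fin: "finite V" and inv: "skim_invariant V E l r s"
    and not_full: "\<forall>w \<in> V. card (sketch s w) < k" and step: "process_pair V E l r s s'"
  shows "full_sketch_bound V k s'"
proof -
  obtain u i where ui: "(u, i) \<in> avail V l s"
    and sk: "\<And>w. sketch s' w = (if res_reach V E (covered s) i w u
                                  then insert (r u i) (sketch s w) else sketch s w)"
    using process_pairE[OF step] by metis
  have below_new: "\<rho> \<le> r u i" if "\<rho> \<in> sketch s' w'" for w' \<rho>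
  proof (cases "\<rho> = r u i")
    case False
    then have "\<rho> \<in> sketch s w'" using that sk[of w'] by (simp split: if_splits)
    then obtain p where p: "p \<in> processed s" "\<rho> = case_prod r p"
      using inv unfolding skim_invariant_def by blast
    then have "case_prod r p \<le> case_prod r (u, i)"
      using inv ui unfolding skim_invariant_def by blast
    then show ?thesis using p by simp
  qed simp
  have fin_w: "finite (sketch s w)" for w using skim_invariant_finite_sketch[OF fin inv] .
  show ?thesis unfolding full_sketch_bound_def
  proof (intro ballI conjI impI)
    fix w assume w: "w \<in> V"
    have "card (sketch s' w) \<le> Suc (card (sketch s w))"
      using fin_w by (simp add: sk card_insert_if)
    then show "card (sketch s' w) \<le> k" using not_full w by fastforce
  next
    fix w w' \<rho> assume w: "w \<in> V" and full: "card (sketch s' w) = k" and "\<rho> \<in> sketch s' w'"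
    have "res_reach V E (covered s) i w u"
    proof (rule ccontr)
      assume "\<not> res_reach V E (covered s) i w u"
      then have "sketch s' w = sketch s w" by (simp add: sk)
      with full not_full w show False by auto
    qed
    then have "r u i \<in> sketch s' w" "finite (sketch s' w)" using fin_w by (simp_all add: sk)
    then have "r u i \<le> Max (sketch s' w)" by simp
    with below_new \<open>\<rho> \<in> sketch s' w'\<close> show "\<rho> \<le> Max (sketch s' w)"
      by (meson order_trans)
  qed
qed

lemma skim_scan_invariant:
  assumes "skim_scan V E l r k s s' x b" "finite V"
    "skim_invariant V E l r s" "full_sketch_bound V k s"
  shows "skim_invariant V E l r s' \<and> full_sketch_bound V k s' \<and> x \<in> V \<and>
    (b \<longrightarrow> card (sketch s' x) = k) \<and> (\<not> b \<longrightarrow> (\<forall>w \<in> V. card (sketch s' w) < k))"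
  using assms
proof (induction rule: skim_scan.induct)
  case (scan_step s s1 s2 x b)
  then show ?case
    using process_pair_invariant process_pair_full_sketch_bound by blast
qed auto

lemma residual_update_invariant:
  assumes inv: "skim_invariant V E l r s" and inj: "inj_on (case_prod r) (V \<times> {..<l})"
  shows "skim_invariant V E l r (residual_update V E l s x)" (is "skim_invariant V E l r ?s'")
proof -
  let ?reach = "\<lambda>C w. {(z, j) \<in> processed s. res_reach V E C j w z}"
  have proc: "processed s \<subseteq> V \<times> {..<l}" and sk: "\<And>w. sketch s w = case_prod r ` ?reach (covered s) w"
    and sorted: "\<forall>p \<in> processed s. \<forall>q \<in> avail V l s. case_prod r p \<le> case_prod r q"
    using inv unfolding skim_invariant_def by blast+
  have "?reach (covered s) w - ?reach (covered s) x = ?reach (covered ?s') w" for w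
    using proc res_reach_residual_iff[of _ l V E "covered s" x w]
    unfolding residual_update_def by auto
  moreover have "sketch s w - sketch s x = case_prod r ` (?reach (covered s) w - ?reach (covered s) x)" for w
    unfolding sk using proc by (intro inj_on_image_set_diff[symmetric, OF inj]) auto
  ultimately have "sketch ?s' w = case_prod r ` ?reach (covered ?s') w" for w
    by (simp add: residual_update_def)
  moreover have "avail V l ?s' \<subseteq> avail V l s"
    unfolding avail_def residual_update_def by auto
  ultimately show ?thesis
    using proc sorted unfolding skim_invariant_def by (simp add: residual_update_def) blast
qed

lemma residual_update_card_less:
  assumes fin: "finite V" and inv: "skim_invariant V E l r s" and bound: "full_sketch_bound V k s"
    and "x \<in> V" "k \<ge> 1" and x_full: "card (sketch s x) = k \<or> (\<forall>w \<in> V. card (sketch s w) < k)"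
  shows "\<forall>w \<in> V. card (sketch (residual_update V E l s x) w) < k"
proof
  fix w assume w: "w \<in> V"
  have fin_sk: "finite (sketch s y)" for y using skim_invariant_finite_sketch[OF fin inv] .
  have le: "card (sketch s w - sketch s x) \<le> card (sketch s w)"
    using fin_sk by (simp add: card_mono)
  show "card (sketch (residual_update V E l s x) w) < k"
  proof (cases "card (sketch s w) = k")
    case w_full: True
    with x_full w have x_full': "card (sketch s x) = k" by auto
    have ne: "sketch s w \<noteq> {}" "sketch s x \<noteq> {}"
      using w_full x_full' \<open>k \<ge> 1\<close> by auto
    \<comment> \<open>two full sketches dominate each other, so they share their maximum\<close>
    have "Max (sketch s w) = Max (sketch s x)"
      using bound w_full x_full' w \<open>x \<in> V\<close> fin_sk ne unfolding full_sketch_bound_def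
      by (meson Max_in antisym)
    then have "Max (sketch s w) \<in> sketch s x" using fin_sk ne by simp
    then have "sketch s w - sketch s x \<subseteq> sketch s w - {Max (sketch s w)}" by auto
    then have "card (sketch s w - sketch s x) < card (sketch s w)"
      using fin_sk ne by (meson Max_in card_Diff1_less card_mono finite_Diff le_less_trans)
    with w_full show ?thesis by (simp add: residual_update_def)
  next
    case False
    then have "card (sketch s w) < k" using bound w unfolding full_sketch_bound_def by fastforce
    with le show ?thesis by (simp add: residual_update_def)
  qed
qed

lemma skim_reachable_invariant:
  assumes "finite V" "inj_on (case_prod r) (V \<times> {..<l})" "k \<ge> 1"
  shows "skim_reachable V E l r k s \<Longrightarrow>
    skim_invariant V E l r s \<and> (\<forall>w \<in> V. card (sketch s w) < k)"
proof (induction rule: skim_reachable.induct)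
  case reach_init
  show ?case using assms(3) by (simp add: skim_invariant_def skim_init_def)
next
  case (reach_iter s s1 x b)
  then have "full_sketch_bound V k s" by (simp add: full_sketch_bound_if_not_full)
  with reach_iter have scan: "skim_invariant V E l r s1" "full_sketch_bound V k s1" "x \<in> V"
    "card (sketch s1 x) = k \<or> (\<forall>w \<in> V. card (sketch s1 w) < k)"
    using skim_scan_invariant[OF reach_iter.hyps(2) assms(1)] by blast+
  show ?case
    using residual_update_invariant[OF scan(1) assms(2)]
      residual_update_card_less[OF assms(1) scan(1-3) assms(3) scan(4)] by blast
qed

lemma skim_reachable_scan_selected:
  assumes "finite V" "inj_on (case_prod r) (V \<times> {..<l})" "k \<ge> 1"
    and "skim_reachable V E l r k s" "skim_scan V E l r k s s' x True"
  shows "skim_invariant V E l r s' \<and> full_sketch_bound V k s' \<and> x \<in> V \<and> card (sketch s' x) = k"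
proof -
  have inv: "skim_invariant V E l r s" and not_full: "\<forall>w \<in> V. card (sketch s w) < k"
    using skim_reachable_invariant[OF assms(1-4)] by simp_all
  then show ?thesis
    using skim_scan_invariant[OF assms(5,1) inv full_sketch_bound_if_not_full[OF not_full]] by simp
qed

lemma sketch_eq_residual_ranks_below:
  assumes inv: "skim_invariant V E l r s" and inj: "inj_on (case_prod r) (V \<times> {..<l})"
    and t: "t \<in> case_prod r ` processed s" and below: "\<forall>\<rho> \<in> sketch s u. \<rho> \<le> t"
  shows "sketch s u = {\<rho> \<in> {r z i | z i. i < l \<and> res_reach V E (covered s) i u z}. \<rho> \<le> t}"
proof -
  have proc: "processed s \<subseteq> V \<times> {..<l}"
    and sk: "sketch s u = case_prod r ` {(z, j) \<in> processed s. res_reach V E (covered s) j u z}"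
    and sorted: "\<forall>p \<in> processed s. \<forall>q \<in> avail V l s. case_prod r p \<le> case_prod r q"
    using inv unfolding skim_invariant_def by blast+
  have "r z i \<in> sketch s u" if reach: "res_reach V E (covered s) i u z" "i < l" "r z i \<le> t" for z i
  proof (cases "(z, i) \<in> processed s")
    case False
    \<comment> \<open>an unprocessed reachable pair of rank at most t would be the pair of rank t itself\<close>
    obtain p where p: "p \<in> processed s" "t = case_prod r p" using t by blast
    have "(z, i) \<in> avail V l s"
      using False reach(2) res_reach_uncovered[OF reach(1)] unfolding avail_def by simp
    then have "t = r z i" using sorted p reach by fastforce
    moreover have "(z, i) \<in> V \<times> {..<l}" using reach(2) res_reach_uncovered[OF reach(1)] by simp
    ultimately have "p = (z, i)" using inj_onD[OF inj, of p "(z, i)"] p proc by auto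
    with p False show ?thesis by simp
  qed (use reach sk in auto)
  moreover have "\<rho> \<in> {r z i | z i. i < l \<and> res_reach V E (covered s) i u z}"
    if "\<rho> \<in> sketch s u" for \<rho>
    using that proc unfolding sk by force
  ultimately show ?thesis using below by blast
qed

theorem mainTheorem2:
  fixes V :: "'v set" and E :: "nat \<Rightarrow> ('v \<times> 'v) set" and l k :: nat
    and r :: "'v \<Rightarrow> nat \<Rightarrow> real"
    and s s1 :: "'v skim_state" and v :: "'v"
  assumes "finite V"
    and "\<And>i. i < l \<Longrightarrow> E i \<subseteq> V \<times> V"
    and "\<And>z i. z \<in> V \<Longrightarrow> i < l \<Longrightarrow> r z i \<in> {0..1}"
    and "inj_on (\<lambda>(z, i). r z i) (V \<times> {..<l})"
    and "k \<ge> 1"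
    and "skim_reachable V E l r k s"
    and "skim_scan V E l r k s s1 v True"
  shows "\<forall>u \<in> V. u \<notin> set (seeds (residual_update V E l s1 v)) \<longrightarrow>
           sketch (residual_update V E l s1 v) u =
             {\<rho> \<in> combined_sketch V E l r k (covered (residual_update V E l s1 v)) u.
                \<rho> \<le> kth_smallest k (sketch s1 v)}"
proof (intro ballI impI)
  fix u assume "u \<in> V"
  let ?s' = "residual_update V E l s1 v" and ?\<tau> = "Max (sketch s1 v)"
  let ?S = "{r z i | z i. i < l \<and> res_reach V E (covered ?s') i u z}"
  have inv1: "skim_invariant V E l r s1" and bound1: "full_sketch_bound V k s1"
    and "v \<in> V" and v_full: "card (sketch s1 v) = k"
    using skim_reachable_scan_selected[OF assms(1,4-7)] by simp_all
  have fin1: "finite (sketch s1 w)" for w using skim_invariant_finite_sketch[OF assms(1) inv1] .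
  have tau: "kth_smallest k (sketch s1 v) = ?\<tau>" using kth_smallest_eq_Max[OF fin1 v_full assms(5)] .
  have "?\<tau> \<in> sketch s1 v" using fin1 v_full assms(5) by (intro Max_in) auto
  then have tau_processed: "?\<tau> \<in> case_prod r ` processed ?s'"
    using inv1 unfolding skim_invariant_def by (auto simp: residual_update_def)
  have sub: "sketch ?s' u \<subseteq> sketch s1 u" by (auto simp: residual_update_def)
  moreover have "\<forall>\<rho> \<in> sketch s1 u. \<rho> \<le> ?\<tau>"
    using bound1 v_full \<open>u \<in> V\<close> \<open>v \<in> V\<close> unfolding full_sketch_bound_def by blast
  ultimately have eq: "sketch ?s' u = {\<rho> \<in> ?S. \<rho> \<le> ?\<tau>}"
    using sketch_eq_residual_ranks_below[OF residual_update_invariant[OF inv1 assms(4)] assms(4)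
        tau_processed] by blast
  have "card (sketch ?s' u) \<le> card (sketch s1 u)" using sub fin1 by (rule card_mono[rotated])
  also have "\<dots> \<le> k" using bound1 \<open>u \<in> V\<close> unfolding full_sketch_bound_def by blast
  finally have "card {\<rho> \<in> ?S. \<rho> \<le> ?\<tau>} \<le> k" unfolding eq .
  moreover have "finite {\<rho> \<in> ?S. \<rho> \<le> ?\<tau>}" using sub fin1 unfolding eq by (rule finite_subset)
  ultimately show "sketch ?s' u =
      {\<rho> \<in> combined_sketch V E l r k (covered ?s') u. \<rho> \<le> kth_smallest k (sketch s1 v)}"
    unfolding combined_sketch_def tau eq by (simp add: bottom_k_below)
qed

end
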